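(* Let $d_1\ge1$, $d_2\ge2$, $M=\{y=0\}\subseteq N=\{y_1=0\}$ in $\mathbb{R}^{d_1}_x\times\mathbb{R}^{d_2}_y$, and let $E$ be the extension operator $E(w)(x,y')=(2\pi)^{-(d_1+d_2-1)/2}\iint\hat w(\xi)\psi(\eta'/|\xi|)|\xi|^{-(d_2-1)}e^{i\xi\cdot x+i\eta'\cdot y'}d\xi\,d\eta'$ (with $\psi$ as in the context). Given $w_0\in\dot H^{\frac{3-d_2}{2}}(M)$, $w_{0,j}\in\dot H^{\frac{1-d_2}{2}}(M)$ for $j=2,\dots,d_2$, and $w_{10}\in\dot H^{\frac{1-d_2}{2}}(M)$, define $$u_0=E(w_0)+\sum_{j=2}^{d_2}y_j\,E(w_{0,j}),\qquad u_1=E(w_{10}).$$ Then $(u_0,u_1)\in X^C$ and $$\|(u_0,u_1)\|_{X^C}^2\le C\Bigl(\|w_0\|_{\dot H^{\frac{3-d_2}{2}}}^2+\sum_{j=2}^{d_2}\|w_{0,j}\|_{\dot H^{\frac{1-d_2}{2}}}^2+\|w_{10}\|_{\dot H^{\frac{1-d_2}{2}}}^2\Bigr).$$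
   Context: $y'=(y_2,\dots,y_{d_2})$ are coordinates on $N$ together with $x$; dual variables $(\xi,\eta')$. $\psi\in C_0^\infty(\mathbb{R}^{d_2-1})$ is even, $\psi\ge0$, supported in the unit ball, with $(2\pi)^{-(d_2-1)/2}\int\psi=1$. $\hat w(\xi)=(2\pi)^{-d_1/2}\int e^{-i\xi\cdot x}w\,dx$; $\dot H^s$ has norm $\int|\xi|^{2s}|\hat w|^2d\xi$. The data are meant as $w_0=u|_M$, $w_{0,j}=\partial_{y_j}u|_M$, $w_{10}=\partial_{y_1}u|_M$. With $\omega=\sqrt{|\xi|^2-|\eta'|^2}$ on $\{|\eta'|\le|\xi|\}$ and $\lambda=\sqrt{|\eta'|^2-|\xi|^2}$ elsewhere, $\|(v_0,v_1)\|_X^2=\iint_{\{|\eta'|<|\xi|\}}\omega^2|\hat v_0|^2+\iint_{\{|\xi|\le|\eta'|\}}\lambda^2|\hat v_0|^2+\iint|\hat v_1|^2$; $X^C$ consists of $v$ with finite $X$-norm and $\mathrm{supp}(\hat v_0,\hat v_1)\subseteq\{|\xi|\ge|\eta'|\}$, normed by $\|\cdot\|_X$. *)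

theory Defs
  imports "HOL-Analysis.Analysis"
begin

fun dirderiv :: "'b::real_normed_vector list \<Rightarrow> ('b \<Rightarrow> real) \<Rightarrow> 'b \<Rightarrow> real" where
  "dirderiv [] f = f"
| "dirderiv (v # vs) f = (\<lambda>x. frechet_derivative (dirderiv vs f) (at x) v)"

definition smooth_fun :: "('b::real_normed_vector \<Rightarrow> real) \<Rightarrow> bool" where
  "smooth_fun f \<longleftrightarrow> (\<forall>vs x. dirderiv vs f differentiable (at x))"

text \<open>Homogeneous Sobolev space on the Fourier side: W plays the role of the
  Fourier transform of w.\<close>
definition Hdot_mem :: "real \<Rightarrow> ('a::euclidean_space \<Rightarrow> complex) \<Rightarrow> bool" where
  "Hdot_mem s W \<longleftrightarrow> W \<in> borel_measurable lborel \<and>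
     integrable lborel (\<lambda>\<xi>. norm \<xi> powr (2 * s) * (cmod (W \<xi>))\<^sup>2)"

definition Hdot_norm2 :: "real \<Rightarrow> ('a::euclidean_space \<Rightarrow> complex) \<Rightarrow> real" where
  "Hdot_norm2 s W = (\<integral>\<xi>. norm \<xi> powr (2 * s) * (cmod (W \<xi>))\<^sup>2 \<partial>lborel)"

text \<open>Fourier transform (in (x,y')) of E(w), where W is the Fourier transform of w:
  W(xi) psi(eta'/|xi|) |xi|^(-(d2-1)), with d2 - 1 = DIM('b).\<close>
definition ext_symbol :: "('b::euclidean_space \<Rightarrow> real) \<Rightarrow> ('a::euclidean_space \<Rightarrow> complex)
    \<Rightarrow> 'a \<times> 'b \<Rightarrow> complex" where
  "ext_symbol \<psi> W z = W (fst z) *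
     complex_of_real (\<psi> (snd z /\<^sub>R norm (fst z)) * norm (fst z) powr (- real DIM('b)))"

text \<open>Derivative in the eta'-direction b; multiplication by y_j on the physical
  side corresponds to i times this derivative (j-th basis direction) on the Fourier side.\<close>
definition eta_deriv :: "('a \<times> 'b::real_normed_vector \<Rightarrow> complex) \<Rightarrow> 'b \<Rightarrow> 'a \<times> 'b \<Rightarrow> complex" where
  "eta_deriv F b z = vector_derivative (\<lambda>t::real. F (fst z, snd z + t *\<^sub>R b)) (at 0)"

text \<open>The X norm (squared) and membership in X^C, in terms of the Fourier
  transforms V0, V1 of (v0, v1); z = (xi, eta').\<close>
definition X_norm2 :: "('a::euclidean_space \<times> 'b::euclidean_space \<Rightarrow> complex)
    \<Rightarrow> ('a \<times> 'b \<Rightarrow> complex) \<Rightarrow> real" where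
  "X_norm2 V0 V1 =
     (\<integral>z. indicator {z. norm (snd z) < norm (fst z)} z *
           ((norm (fst z))\<^sup>2 - (norm (snd z))\<^sup>2) * (cmod (V0 z))\<^sup>2 \<partial>lborel)
   + (\<integral>z. indicator {z. norm (fst z) \<le> norm (snd z)} z *
           ((norm (snd z))\<^sup>2 - (norm (fst z))\<^sup>2) * (cmod (V0 z))\<^sup>2 \<partial>lborel)
   + (\<integral>z. (cmod (V1 z))\<^sup>2 \<partial>lborel)"

definition XC_mem :: "('a::euclidean_space \<times> 'b::euclidean_space \<Rightarrow> complex)
    \<Rightarrow> ('a \<times> 'b \<Rightarrow> complex) \<Rightarrow> bool" where
  "XC_mem V0 V1 \<longleftrightarrow>
     V0 \<in> borel_measurable lborel \<and> V1 \<in> borel_measurable lborel \<and>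
     integrable lborel (\<lambda>z. indicator {z. norm (snd z) < norm (fst z)} z *
           ((norm (fst z))\<^sup>2 - (norm (snd z))\<^sup>2) * (cmod (V0 z))\<^sup>2) \<and>
     integrable lborel (\<lambda>z. indicator {z. norm (fst z) \<le> norm (snd z)} z *
           ((norm (snd z))\<^sup>2 - (norm (fst z))\<^sup>2) * (cmod (V0 z))\<^sup>2) \<and>
     integrable lborel (\<lambda>z. (cmod (V1 z))\<^sup>2) \<and>
     (AE z in lborel. norm (fst z) < norm (snd z) \<longrightarrow> V0 z = 0 \<and> V1 z = 0)"

end

theory Submission
  imports Defs
begin

text \<open>On the Fourier side \<open>E(w)\<close> is \<open>W(\<xi>) \<psi>(\<eta>'/|\<xi>|) |\<xi>|^-(d\<^sub>2-1)\<close>, which lives in the cone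
  \<open>|\<eta>'| \<le> |\<xi>|\<close>; there only the \<open>\<omega>\<close>-part of the X norm survives, and \<open>\<omega>\<^sup>2 \<le> |\<xi>|\<^sup>2\<close>.
  Multiplication by \<open>y\<^sub>j\<close> becomes \<open>i \<partial>/\<partial>\<eta>\<^sub>j\<close>, which falls on \<open>\<psi>\<close> and costs a factor \<open>1/|\<xi>|\<close>,
  exactly compensated by the lower regularity required of \<open>w\<^sub>0\<^sub>,\<^sub>j\<close>. Every piece is then of the
  form \<open>|W(\<xi>)|\<^sup>2 \<phi>(\<eta>'/|\<xi>|)\<^sup>2 |\<xi>|^(2s-(d\<^sub>2-1))\<close> with \<open>\<phi>\<close> either \<open>\<psi>\<close> or one of its partial
  derivatives, and integrating first in \<open>\<eta>'\<close> (a dilation by \<open>|\<xi>|\<close>) turns its integral into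
  \<open>\<parallel>\<phi>\<parallel>\<^sup>2\<close> in \<open>L\<^sup>2\<close> times the squared homogeneous Sobolev norm of order \<open>s\<close> of \<open>w\<close>.\<close>

lemma nn_integral_lborel_divide_scaleR:
  fixes g :: "'b::euclidean_space \<Rightarrow> ennreal"
  assumes [measurable]: "g \<in> borel_measurable borel" and c: "0 < c"
  shows "(\<integral>\<^sup>+\<eta>. g (\<eta> /\<^sub>R c) \<partial>lborel) = ennreal (c ^ DIM('b)) * (\<integral>\<^sup>+x. g x \<partial>lborel)"
proof -
  have "(lborel::'b measure) = density (distr lborel borel (\<lambda>x. 0 + c *\<^sub>R x)) (\<lambda>_. \<bar>c\<bar> ^ DIM('b))"
    using lborel_affine[of c 0] c by simp
  then have "(\<integral>\<^sup>+\<eta>. g (\<eta> /\<^sub>R c) \<partial>lborel)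
      = (\<integral>\<^sup>+\<eta>. g (\<eta> /\<^sub>R c) \<partial>density (distr lborel borel (\<lambda>x. 0 + c *\<^sub>R x)) (\<lambda>_. \<bar>c\<bar> ^ DIM('b)))"
    by (rule arg_cong)
  also have "\<dots> = (\<integral>\<^sup>+x. ennreal (\<bar>c\<bar> ^ DIM('b)) * g x \<partial>lborel)"
    using c by (simp add: nn_integral_density nn_integral_distr)
  also have "\<dots> = ennreal (c ^ DIM('b)) * (\<integral>\<^sup>+x. g x \<partial>lborel)"
    using c by (simp add: nn_integral_cmult)
  finally show ?thesis .
qed

lemma measurable_fst_borel [measurable]:
  "fst \<in> (borel :: ('a::euclidean_space \<times> 'b::euclidean_space) measure) \<rightarrow>\<^sub>M borel"
  by (intro borel_measurable_continuous_onI continuous_intros)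

lemma measurable_snd_borel [measurable]:
  "snd \<in> (borel :: ('a::euclidean_space \<times> 'b::euclidean_space) measure) \<rightarrow>\<^sub>M borel"
  by (intro borel_measurable_continuous_onI continuous_intros)

lemma scaled_profile_integral:
  fixes G :: "'a::euclidean_space \<Rightarrow> complex" and \<phi> :: "'b::euclidean_space \<Rightarrow> real"
  assumes [measurable]: "G \<in> borel_measurable borel" "\<phi> \<in> borel_measurable borel"
    and \<phi>_sq: "integrable lborel (\<lambda>y. (\<phi> y)\<^sup>2)"
    and G_sq: "integrable lborel (\<lambda>\<xi>. norm \<xi> powr q * (cmod (G \<xi>))\<^sup>2)"
  defines "f \<equiv> \<lambda>z::'a \<times> 'b. (cmod (G (fst z)))\<^sup>2 * (\<phi> (snd z /\<^sub>R norm (fst z)))\<^sup>2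
                              * norm (fst z) powr (q - DIM('b))"
  shows "integrable lborel f"
    and "(\<integral>z. f z \<partial>lborel) = (\<integral>y. (\<phi> y)\<^sup>2 \<partial>lborel) * (\<integral>\<xi>. norm \<xi> powr q * (cmod (G \<xi>))\<^sup>2 \<partial>lborel)"
proof -
  define I\<phi> where "I\<phi> = (\<integral>y. (\<phi> y)\<^sup>2 \<partial>lborel)"
  define IG where "IG = (\<integral>\<xi>. norm \<xi> powr q * (cmod (G \<xi>))\<^sup>2 \<partial>lborel)"
  have [measurable]: "f \<in> borel_measurable borel" unfolding f_def by measurable
  have f_nonneg: "0 \<le> f z" for z unfolding f_def by simp
  have "0 \<le> I\<phi>" "0 \<le> IG" unfolding I\<phi>_def IG_def by (auto intro: integral_nonneg_AE)
  have I\<phi>_nn: "(\<integral>\<^sup>+y. ennreal ((\<phi> y)\<^sup>2) \<partial>lborel) = ennreal I\<phi>"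
    unfolding I\<phi>_def by (rule nn_integral_eq_integral[OF \<phi>_sq]) simp
  have IG_nn: "(\<integral>\<^sup>+\<xi>. ennreal (norm \<xi> powr q * (cmod (G \<xi>))\<^sup>2) \<partial>lborel) = ennreal IG"
    unfolding IG_def by (rule nn_integral_eq_integral[OF G_sq]) simp
  have fibre: "(\<integral>\<^sup>+\<eta>. ennreal (f (\<xi>, \<eta>)) \<partial>lborel) = ennreal (norm \<xi> powr q * (cmod (G \<xi>))\<^sup>2) * ennreal I\<phi>"
    if "\<xi> \<noteq> 0" for \<xi>
  proof -
    have r: "0 < norm \<xi>" using that by simp
    define a where "a = (cmod (G \<xi>))\<^sup>2 * norm \<xi> powr (q - DIM('b))"
    have "(\<integral>\<^sup>+\<eta>. ennreal (f (\<xi>, \<eta>)) \<partial>lborel) = (\<integral>\<^sup>+\<eta>. ennreal a * ennreal ((\<phi> (\<eta> /\<^sub>R norm \<xi>))\<^sup>2) \<partial>lborel)"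
      unfolding f_def a_def by (intro nn_integral_cong) (simp add: ennreal_mult'[symmetric] mult_ac)
    also have "\<dots> = ennreal a * (\<integral>\<^sup>+\<eta>. ennreal ((\<phi> (\<eta> /\<^sub>R norm \<xi>))\<^sup>2) \<partial>lborel)"
      by (rule nn_integral_cmult) measurable
    also have "\<dots> = ennreal a * (ennreal (norm \<xi> ^ DIM('b)) * ennreal I\<phi>)"
      using nn_integral_lborel_divide_scaleR[of "\<lambda>y. ennreal ((\<phi> y)\<^sup>2)" "norm \<xi>"] r I\<phi>_nn by simp
    also have "\<dots> = ennreal (a * norm \<xi> ^ DIM('b)) * ennreal I\<phi>"
      unfolding a_def by (simp add: ennreal_mult'[symmetric] mult.assoc)
    also have "a * norm \<xi> ^ DIM('b) = norm \<xi> powr q * (cmod (G \<xi>))\<^sup>2"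
      unfolding a_def using r by (simp add: powr_realpow[symmetric] powr_add[symmetric] mult_ac)
    finally show ?thesis .
  qed
  have "(\<integral>\<^sup>+z. ennreal (f z) \<partial>lborel) = (\<integral>\<^sup>+\<xi>. \<integral>\<^sup>+\<eta>. ennreal (f (\<xi>, \<eta>)) \<partial>lborel \<partial>lborel)"
    unfolding lborel_prod[symmetric] by (rule lborel.nn_integral_fst[symmetric]) (simp add: lborel_prod)
  also have "\<dots> = (\<integral>\<^sup>+\<xi>. ennreal (norm \<xi> powr q * (cmod (G \<xi>))\<^sup>2) * ennreal I\<phi> \<partial>lborel)"
    by (intro nn_integral_cong_AE eventually_mono[OF AE_lborel_singleton[of 0]]) (simp add: fibre)
  also have "\<dots> = ennreal IG * ennreal I\<phi>"
    by (simp add: nn_integral_multc IG_nn)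
  also have "\<dots> = ennreal (I\<phi> * IG)"
    using \<open>0 \<le> I\<phi>\<close> \<open>0 \<le> IG\<close> by (simp add: ennreal_mult mult.commute)
  finally have nn: "(\<integral>\<^sup>+z. ennreal (f z) \<partial>lborel) = ennreal (I\<phi> * IG)" .
  show "integrable lborel f"
    by (rule integrableI_nonneg) (use f_nonneg nn in auto)
  have "integral\<^sup>L lborel f = enn2real (\<integral>\<^sup>+z. ennreal (f z) \<partial>lborel)"
    by (rule integral_eq_nn_integral) (use f_nonneg in auto)
  then show "integral\<^sup>L lborel f = I\<phi> * IG"
    using nn \<open>0 \<le> I\<phi>\<close> \<open>0 \<le> IG\<close> by simp
qed

lemma borel_measurable_ext_symbol [measurable]:
  fixes \<phi> :: "'b::euclidean_space \<Rightarrow> real" and W :: "'a::euclidean_space \<Rightarrow> complex"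
  assumes [measurable]: "\<phi> \<in> borel_measurable borel" "W \<in> borel_measurable borel"
  shows "ext_symbol \<phi> W \<in> borel_measurable borel"
  unfolding ext_symbol_def by measurable

lemma Hdot_mem_borel_measurable: "Hdot_mem s W \<Longrightarrow> W \<in> borel_measurable borel"
  unfolding Hdot_mem_def by simp

lemma ext_symbol_weighted_square:
  fixes \<phi> :: "'b::euclidean_space \<Rightarrow> real" and W :: "'a::euclidean_space \<Rightarrow> complex"
  assumes \<phi>[measurable]: "\<phi> \<in> borel_measurable borel"
    and \<phi>_sq: "integrable lborel (\<lambda>y. (\<phi> y)\<^sup>2)"
    and W: "Hdot_mem s W"
    and k: "2 * s = real k - DIM('b)"
  shows "integrable lborel (\<lambda>z. norm (fst z) ^ k * (cmod (ext_symbol \<phi> W z))\<^sup>2)"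
    and "(\<integral>z. norm (fst z) ^ k * (cmod (ext_symbol \<phi> W z))\<^sup>2 \<partial>lborel)
           = (\<integral>y. (\<phi> y)\<^sup>2 \<partial>lborel) * Hdot_norm2 s W"
proof -
  have [measurable]: "W \<in> borel_measurable borel"
    using W by (rule Hdot_mem_borel_measurable)
  have W_sq: "integrable lborel (\<lambda>\<xi>. norm \<xi> powr (2 * s) * (cmod (W \<xi>))\<^sup>2)"
    using W unfolding Hdot_mem_def by simp
  have "norm (fst z) ^ k * (cmod (ext_symbol \<phi> W z))\<^sup>2
      = (cmod (W (fst z)))\<^sup>2 * (\<phi> (snd z /\<^sub>R norm (fst z)))\<^sup>2 * norm (fst z) powr (2 * s - DIM('b))" for z
  proof (cases "fst z = 0")
    case True
    then show ?thesis by (simp add: ext_symbol_def)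
  next
    case False
    then have "norm (fst z) ^ k * (norm (fst z) powr - real DIM('b))\<^sup>2 = norm (fst z) powr (2 * s - DIM('b))"
      by (simp add: k powr_realpow[symmetric] powr_add[symmetric] power2_eq_square)
    then show ?thesis
      by (simp add: ext_symbol_def norm_mult power_mult_distrib mult_ac)
  qed
  then have eq: "(\<lambda>z. norm (fst z) ^ k * (cmod (ext_symbol \<phi> W z))\<^sup>2)
      = (\<lambda>z::'a \<times> 'b. (cmod (W (fst z)))\<^sup>2 * (\<phi> (snd z /\<^sub>R norm (fst z)))\<^sup>2 * norm (fst z) powr (2 * s - DIM('b)))"
    by (rule ext)
  show "integrable lborel (\<lambda>z. norm (fst z) ^ k * (cmod (ext_symbol \<phi> W z))\<^sup>2)"
    unfolding eq by (rule scaled_profile_integral(1)) (use \<phi>_sq W_sq in auto)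
  show "(\<integral>z. norm (fst z) ^ k * (cmod (ext_symbol \<phi> W z))\<^sup>2 \<partial>lborel) = (\<integral>y. (\<phi> y)\<^sup>2 \<partial>lborel) * Hdot_norm2 s W"
    unfolding eq Hdot_norm2_def by (rule scaled_profile_integral(2)) (use \<phi>_sq W_sq in auto)
qed

lemma smooth_fun_differentiable: "smooth_fun f \<Longrightarrow> f differentiable (at x)"
  using dirderiv.simps(1) unfolding smooth_fun_def by metis

lemma smooth_fun_continuous_on: "smooth_fun f \<Longrightarrow> continuous_on S f"
  by (intro differentiable_imp_continuous_on differentiable_at_imp_differentiable_on
        smooth_fun_differentiable)

lemma smooth_fun_continuous_on_derivative:
  assumes "smooth_fun f"
  shows "continuous_on S (\<lambda>y. frechet_derivative f (at y) v)"
proof -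
  have "dirderiv [v] f differentiable (at x)" for x
    using assms unfolding smooth_fun_def by blast
  then have "continuous_on S (dirderiv [v] f)"
    by (intro differentiable_imp_continuous_on differentiable_at_imp_differentiable_on)
  then show ?thesis by simp
qed

lemma vanishes_outside_closed_support:
  assumes "closure {y. f y \<noteq> 0} \<subseteq> cball 0 1" "1 < norm y"
  shows "f y = 0"
  using assms closure_subset[of "{y. f y \<noteq> 0}"] by fastforce

lemma frechet_derivative_vanishes_outside_ball:
  fixes f :: "'b::real_normed_vector \<Rightarrow> real"
  assumes f: "\<And>y. 1 < norm y \<Longrightarrow> f y = 0" and "1 < norm y"
  shows "frechet_derivative f (at y) v = 0"
proof -
  have "(f has_derivative (\<lambda>_. 0)) (at y)"
  proof (rule has_derivative_transform_within_open)
    show "((\<lambda>_. 0) has_derivative (\<lambda>_. 0)) (at y)" by simp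
    show "open {y::'b. 1 < norm y}" by (intro open_Collect_less continuous_intros)
  qed (use assms in auto)
  then show ?thesis using frechet_derivative_at by metis
qed

lemma square_integrable_vanishing_outside_ball:
  fixes f :: "'b::euclidean_space \<Rightarrow> real"
  assumes "continuous_on UNIV f" "\<And>y. 1 < norm y \<Longrightarrow> f y = 0"
  shows "f \<in> borel_measurable borel" and "integrable lborel (\<lambda>y. (f y)\<^sup>2)"
proof -
  show "f \<in> borel_measurable borel"
    using assms(1) by (rule borel_measurable_continuous_onI)
  have "integrable lborel (\<lambda>y. indicator (cball (0::'b) 1) y *\<^sub>R (f y)\<^sup>2)"
    by (rule borel_integrable_compact) (auto intro: continuous_intros continuous_on_subset[OF assms(1)])
  moreover have "(\<lambda>y. indicator (cball (0::'b) 1) y *\<^sub>R (f y)\<^sup>2) = (\<lambda>y. (f y)\<^sup>2)"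
    using assms(2) by (auto simp: indicator_def fun_eq_iff)
  ultimately show "integrable lborel (\<lambda>y. (f y)\<^sup>2)" by simp
qed

lemma smooth_profile_square_integrable:
  fixes \<psi> :: "'b::euclidean_space \<Rightarrow> real"
  assumes "smooth_fun \<psi>" "\<And>y. 1 < norm y \<Longrightarrow> \<psi> y = 0"
  shows "\<psi> \<in> borel_measurable borel" "integrable lborel (\<lambda>y. (\<psi> y)\<^sup>2)"
    and "(\<lambda>y. frechet_derivative \<psi> (at y) v) \<in> borel_measurable borel"
      "integrable lborel (\<lambda>y. (frechet_derivative \<psi> (at y) v)\<^sup>2)"
proof -
  show "\<psi> \<in> borel_measurable borel" "integrable lborel (\<lambda>y. (\<psi> y)\<^sup>2)"
    using square_integrable_vanishing_outside_ball[OF smooth_fun_continuous_on[OF assms(1)] assms(2)]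
    by simp_all
  have "frechet_derivative \<psi> (at y) v = 0" if "1 < norm y" for y
    using assms(2) that by (rule frechet_derivative_vanishes_outside_ball)
  with smooth_fun_continuous_on_derivative[OF assms(1)]
  show "(\<lambda>y. frechet_derivative \<psi> (at y) v) \<in> borel_measurable borel"
    "integrable lborel (\<lambda>y. (frechet_derivative \<psi> (at y) v)\<^sup>2)"
    using square_integrable_vanishing_outside_ball by blast+
qed

lemma ext_symbol_vanishes_outside_cone:
  fixes \<phi> :: "'b::euclidean_space \<Rightarrow> real"
  assumes "\<And>y. 1 < norm y \<Longrightarrow> \<phi> y = 0" "norm (fst z) < norm (snd z)"
  shows "ext_symbol \<phi> W z = 0"
proof (cases "fst z = 0")
  case False
  then have "1 < norm (snd z /\<^sub>R norm (fst z))" using assms(2) by (simp add: field_simps)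
  then show ?thesis using assms(1) by (simp add: ext_symbol_def)
qed (simp add: ext_symbol_def)

text \<open>At \<open>\<xi> = 0\<close> both sides are \<open>0\<close>: \<open>ext_symbol\<close> vanishes there because \<open>0 powr a = 0\<close>,
  and the division is by \<open>0\<close>.\<close>
lemma eta_deriv_ext_symbol:
  fixes \<psi> :: "'b::euclidean_space \<Rightarrow> real" and W :: "'a::euclidean_space \<Rightarrow> complex"
  assumes "\<And>y. \<psi> differentiable (at y)"
  shows "eta_deriv (ext_symbol \<psi> W) b z
           = ext_symbol (\<lambda>y. frechet_derivative \<psi> (at y) b) W z / complex_of_real (norm (fst z))"
proof (cases "fst z = 0")
  case True
  then show ?thesis by (simp add: eta_deriv_def ext_symbol_def)
next
  case False
  define r where "r = norm (fst z)"
  define y where "y = snd z /\<^sub>R r"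
  define D where "D = frechet_derivative \<psi> (at y)"
  have r: "0 < r" using False r_def by simp
  have hD: "(\<psi> has_derivative D) (at y)"
    unfolding D_def using assms frechet_derivative_works by blast
  have "((\<lambda>t. y + t *\<^sub>R (b /\<^sub>R r)) has_derivative (\<lambda>t. t *\<^sub>R (b /\<^sub>R r))) (at 0)"
    by (auto intro!: derivative_eq_intros)
  then have "((\<lambda>t. \<psi> (y + t *\<^sub>R (b /\<^sub>R r))) has_derivative (\<lambda>t. D (t *\<^sub>R (b /\<^sub>R r)))) (at 0)"
    using has_derivative_compose[of "\<lambda>t. y + t *\<^sub>R (b /\<^sub>R r)" _ 0 UNIV \<psi> D] hD by simp
  moreover have "(\<lambda>t. D (t *\<^sub>R (b /\<^sub>R r))) = (\<lambda>t. (D b / r) * t)"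
    using linear_cmul[OF has_derivative_linear[OF hD]] by (simp add: fun_eq_iff divide_inverse mult_ac)
  ultimately have "((\<lambda>t. \<psi> (y + t *\<^sub>R (b /\<^sub>R r))) has_real_derivative (D b / r)) (at 0)"
    unfolding has_field_derivative_def by (simp only:)
  then have "((\<lambda>t. W (fst z) * complex_of_real (\<psi> (y + t *\<^sub>R (b /\<^sub>R r)) * r powr - real DIM('b)))
        has_vector_derivative W (fst z) * complex_of_real (D b / r * r powr - real DIM('b))) (at 0)"
    by (intro has_vector_derivative_mult_right has_vector_derivative_of_real DERIV_cmult_right)
  moreover have "(\<lambda>t. ext_symbol \<psi> W (fst z, snd z + t *\<^sub>R b))
      = (\<lambda>t. W (fst z) * complex_of_real (\<psi> (y + t *\<^sub>R (b /\<^sub>R r)) * r powr - real DIM('b)))"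
    by (simp add: fun_eq_iff ext_symbol_def y_def r_def scaleR_add_right mult.commute)
  ultimately have "eta_deriv (ext_symbol \<psi> W) b z = W (fst z) * complex_of_real (D b / r * r powr - real DIM('b))"
    unfolding eta_deriv_def by (simp add: vector_derivative_at)
  then show ?thesis
    by (simp add: ext_symbol_def r_def y_def D_def)
qed

lemma norm_eta_deriv_ext_symbol:
  fixes \<psi> :: "'b::euclidean_space \<Rightarrow> real" and W :: "'a::euclidean_space \<Rightarrow> complex"
  assumes "\<And>y. \<psi> differentiable (at y)"
  shows "(norm (fst z))\<^sup>2 * (cmod (eta_deriv (ext_symbol \<psi> W) b z))\<^sup>2
           = (cmod (ext_symbol (\<lambda>y. frechet_derivative \<psi> (at y) b) W z))\<^sup>2"
  using assms by (cases "fst z = 0")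
    (auto simp: eta_deriv_ext_symbol ext_symbol_def norm_divide power_divide)

lemma borel_measurable_eta_deriv_ext_symbol:
  fixes \<psi> :: "'b::euclidean_space \<Rightarrow> real" and W :: "'a::euclidean_space \<Rightarrow> complex"
  assumes "\<And>y. \<psi> differentiable (at y)"
    and [measurable]: "(\<lambda>y. frechet_derivative \<psi> (at y) b) \<in> borel_measurable borel" "W \<in> borel_measurable borel"
  shows "eta_deriv (ext_symbol \<psi> W) b \<in> borel_measurable borel"
  unfolding eta_deriv_ext_symbol[OF assms(1), abs_def] by measurable

lemma eta_deriv_ext_symbol_vanishes_outside_cone:
  fixes \<psi> :: "'b::euclidean_space \<Rightarrow> real" and W :: "'a::euclidean_space \<Rightarrow> complex"
  assumes "\<And>y. \<psi> differentiable (at y)" "\<And>y. 1 < norm y \<Longrightarrow> \<psi> y = 0"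
    and "norm (fst z) < norm (snd z)"
  shows "eta_deriv (ext_symbol \<psi> W) b z = 0"
proof -
  have "frechet_derivative \<psi> (at y) b = 0" if "1 < norm y" for y
    using assms(2) that by (rule frechet_derivative_vanishes_outside_ball)
  then have "ext_symbol (\<lambda>y. frechet_derivative \<psi> (at y) b) W z = 0"
    using assms(3) by (rule ext_symbol_vanishes_outside_cone)
  then show ?thesis
    by (simp add: eta_deriv_ext_symbol[OF assms(1)])
qed

lemma norm_add_sum_squared_le:
  fixes a :: complex and c :: "'i \<Rightarrow> complex"
  assumes "finite I"
  shows "(cmod (a + sum c I))\<^sup>2 \<le> 2 * (real (card I) + 1) * ((cmod a)\<^sup>2 + (\<Sum>i\<in>I. (cmod (c i))\<^sup>2))"
proof -
  define S where "S = (\<Sum>i\<in>I. cmod (c i))"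
  define Q where "Q = (\<Sum>i\<in>I. (cmod (c i))\<^sup>2)"
  have "0 \<le> Q" unfolding Q_def by (simp add: sum_nonneg)
  have "cmod (a + sum c I) \<le> cmod a + S" unfolding S_def
    by (rule order_trans[OF norm_triangle_ineq]) (simp add: norm_sum)
  then have "(cmod (a + sum c I))\<^sup>2 \<le> (cmod a + S)\<^sup>2" by (simp add: power_mono)
  also have "\<dots> \<le> 2 * (cmod a)\<^sup>2 + 2 * S\<^sup>2"
    using sum_squares_ge_zero[of "cmod a - S" 0] by (simp add: power2_eq_square algebra_simps)
  also have "\<dots> \<le> 2 * (cmod a)\<^sup>2 + 2 * (Q * card I)"
    using sum_squared_le_sum_of_squares[of "\<lambda>i. cmod (c i)" I] unfolding S_def Q_def by simp
  also have "\<dots> \<le> 2 * (real (card I) + 1) * ((cmod a)\<^sup>2 + Q)"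
    using \<open>0 \<le> Q\<close> by (simp add: algebra_simps)
  finally show ?thesis unfolding Q_def .
qed

lemma extension_weight_bound:
  fixes \<psi> :: "'b::euclidean_space \<Rightarrow> real"
    and W0 :: "'a::euclidean_space \<Rightarrow> complex" and Wj :: "'b \<Rightarrow> 'a \<Rightarrow> complex"
  assumes "\<And>y. \<psi> differentiable (at y)"
  shows "(norm (fst z))\<^sup>2 * (cmod (ext_symbol \<psi> W0 z + (\<Sum>b\<in>Basis. \<i> * eta_deriv (ext_symbol \<psi> (Wj b)) b z)))\<^sup>2
    \<le> 2 * (real DIM('b) + 1) * ((norm (fst z))\<^sup>2 * (cmod (ext_symbol \<psi> W0 z))\<^sup>2
         + (\<Sum>b\<in>Basis. (cmod (ext_symbol (\<lambda>y. frechet_derivative \<psi> (at y) b) (Wj b) z))\<^sup>2))"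
proof -
  let ?e = "\<lambda>b. eta_deriv (ext_symbol \<psi> (Wj b)) b z"
  have "(cmod (ext_symbol \<psi> W0 z + (\<Sum>b\<in>Basis. \<i> * ?e b)))\<^sup>2
      \<le> 2 * (real DIM('b) + 1) * ((cmod (ext_symbol \<psi> W0 z))\<^sup>2 + (\<Sum>b\<in>Basis. (cmod (?e b))\<^sup>2))"
    using norm_add_sum_squared_le[of Basis "ext_symbol \<psi> W0 z" "\<lambda>b. \<i> * ?e b"] by (simp add: norm_mult)
  then have "(norm (fst z))\<^sup>2 * (cmod (ext_symbol \<psi> W0 z + (\<Sum>b\<in>Basis. \<i> * ?e b)))\<^sup>2
      \<le> (norm (fst z))\<^sup>2 * (2 * (real DIM('b) + 1) * ((cmod (ext_symbol \<psi> W0 z))\<^sup>2 + (\<Sum>b\<in>Basis. (cmod (?e b))\<^sup>2)))"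
    by (rule mult_left_mono) simp
  also have "\<dots> = 2 * (real DIM('b) + 1) * ((norm (fst z))\<^sup>2 * (cmod (ext_symbol \<psi> W0 z))\<^sup>2
                    + (\<Sum>b\<in>Basis. (norm (fst z))\<^sup>2 * (cmod (?e b))\<^sup>2))"
    by (simp add: algebra_simps sum_distrib_left)
  finally show ?thesis
    by (simp add: norm_eta_deriv_ext_symbol[OF assms])
qed

lemma weighted_sum_le_uniform_bound:
  fixes c H :: "'i \<Rightarrow> real"
  assumes "finite I" "0 \<le> K" "0 \<le> c0" "c0 \<le> M" "\<And>i. i \<in> I \<Longrightarrow> c i \<le> M"
    and "\<And>i. 0 \<le> H i" "0 \<le> H0" "0 \<le> H1"
  shows "K * (c0 * H0 + (\<Sum>i\<in>I. c i * H i)) + c0 * H1 \<le> (K + 1) * M * (H0 + (\<Sum>i\<in>I. H i) + H1)"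
proof -
  have "(\<Sum>i\<in>I. c i * H i) \<le> M * (\<Sum>i\<in>I. H i)"
    unfolding sum_distrib_left using assms by (intro sum_mono mult_right_mono) auto
  then have "K * (c0 * H0 + (\<Sum>i\<in>I. c i * H i)) + c0 * H1
      \<le> K * (M * H0 + M * (\<Sum>i\<in>I. H i)) + M * H1"
    using assms by (intro add_mono mult_left_mono mult_right_mono) auto
  also have "\<dots> \<le> (K + 1) * M * (H0 + (\<Sum>i\<in>I. H i) + H1)"
    using assms by (simp add: algebra_simps add_increasing sum_nonneg)
  finally show ?thesis .
qed

lemma XC_mem_X_norm2_le:
  fixes V0 V1 :: "'a::euclidean_space \<times> 'b::euclidean_space \<Rightarrow> complex"
  assumes [measurable]: "V0 \<in> borel_measurable borel" "V1 \<in> borel_measurable borel"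
    and vanish: "\<And>z. norm (fst z) < norm (snd z) \<Longrightarrow> V0 z = 0 \<and> V1 z = 0"
    and R: "integrable lborel R" "\<And>z. (norm (fst z))\<^sup>2 * (cmod (V0 z))\<^sup>2 \<le> R z"
    and V1: "integrable lborel (\<lambda>z. (cmod (V1 z))\<^sup>2)"
  shows "XC_mem V0 V1"
    and "X_norm2 V0 V1 \<le> (\<integral>z. R z \<partial>lborel) + (\<integral>z. (cmod (V1 z))\<^sup>2 \<partial>lborel)"
proof -
  define f where "f = (\<lambda>z::'a \<times> 'b. indicator {z. norm (snd z) < norm (fst z)} z
                          * ((norm (fst z))\<^sup>2 - (norm (snd z))\<^sup>2) * (cmod (V0 z))\<^sup>2)"
  define g where "g = (\<lambda>z::'a \<times> 'b. indicator {z. norm (fst z) \<le> norm (snd z)} z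
                          * ((norm (snd z))\<^sup>2 - (norm (fst z))\<^sup>2) * (cmod (V0 z))\<^sup>2)"
  have g_zero: "g = (\<lambda>_. 0)"
    using vanish by (force simp: g_def indicator_def fun_eq_iff)
  have f_bounds: "0 \<le> f z \<and> f z \<le> R z" for z
  proof -
    define w where "w = indicator {z. norm (snd z) < norm (fst z)} z * ((norm (fst z))\<^sup>2 - (norm (snd z))\<^sup>2)"
    have "0 \<le> w" "w \<le> (norm (fst z))\<^sup>2"
      unfolding w_def by (auto simp: indicator_def intro: power_strict_mono[THEN less_imp_le])
    then have "w * (cmod (V0 z))\<^sup>2 \<le> (norm (fst z))\<^sup>2 * (cmod (V0 z))\<^sup>2"
      by (intro mult_right_mono) simp_all
    with \<open>0 \<le> w\<close> show ?thesis
      unfolding f_def w_def[symmetric] using R(2)[of z] by simp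
  qed
  have [measurable]: "f \<in> borel_measurable borel"
    unfolding f_def by measurable
  have f_int: "integrable lborel f"
  proof (rule Bochner_Integration.integrable_bound[OF R(1)])
    show "AE z in lborel. norm (f z) \<le> norm (R z)"
      using f_bounds by (intro AE_I2) (metis abs_of_nonneg order_trans abs_ge_self real_norm_def)
  qed simp
  show "XC_mem V0 V1"
    unfolding XC_mem_def using f_int V1 g_zero vanish unfolding f_def g_def by auto
  have "X_norm2 V0 V1 = (\<integral>z. f z \<partial>lborel) + (\<integral>z. (cmod (V1 z))\<^sup>2 \<partial>lborel)"
    unfolding X_norm2_def f_def[symmetric] g_def[symmetric] g_zero by simp
  also have "(\<integral>z. f z \<partial>lborel) \<le> (\<integral>z. R z \<partial>lborel)"
    using f_bounds by (intro integral_mono f_int R(1)) auto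
  finally show "X_norm2 V0 V1 \<le> (\<integral>z. R z \<partial>lborel) + (\<integral>z. (cmod (V1 z))\<^sup>2 \<partial>lborel)"
    by simp
qed

lemma extension_XC_bound:
  fixes \<psi> :: "'b::euclidean_space \<Rightarrow> real"
    and W0 W10 :: "'a::euclidean_space \<Rightarrow> complex" and Wj :: "'b \<Rightarrow> 'a \<Rightarrow> complex"
  assumes \<psi>: "smooth_fun \<psi>" "\<And>y. 1 < norm y \<Longrightarrow> \<psi> y = 0"
    and W0: "Hdot_mem s0 W0" "2 * s0 = 2 - real DIM('b)"
    and Wj: "\<And>b. b \<in> Basis \<Longrightarrow> Hdot_mem s1 (Wj b)"
    and W10: "Hdot_mem s1 W10"
    and s1: "2 * s1 = - real DIM('b)"
  defines "U0 \<equiv> \<lambda>z. ext_symbol \<psi> W0 z + (\<Sum>b\<in>Basis. \<i> * eta_deriv (ext_symbol \<psi> (Wj b)) b z)"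
    and "U1 \<equiv> ext_symbol \<psi> W10"
    and "D\<psi> \<equiv> \<lambda>b y. frechet_derivative \<psi> (at y) b"
  shows "XC_mem U0 U1"
    and "X_norm2 U0 U1 \<le> 2 * (real DIM('b) + 1) * ((\<integral>y. (\<psi> y)\<^sup>2 \<partial>lborel) * Hdot_norm2 s0 W0
           + (\<Sum>b\<in>Basis. (\<integral>y. (D\<psi> b y)\<^sup>2 \<partial>lborel) * Hdot_norm2 s1 (Wj b)))
         + (\<integral>y. (\<psi> y)\<^sup>2 \<partial>lborel) * Hdot_norm2 s1 W10"
proof -
  define R where "R z = 2 * (real DIM('b) + 1) * ((norm (fst z))\<^sup>2 * (cmod (ext_symbol \<psi> W0 z))\<^sup>2
                            + (\<Sum>b\<in>Basis. (cmod (ext_symbol (D\<psi> b) (Wj b) z))\<^sup>2))" for z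
  have \<psi>_diff: "\<And>y. \<psi> differentiable (at y)"
    using \<psi>(1) by (rule smooth_fun_differentiable)
  note profile = smooth_profile_square_integrable[OF \<psi>]
  note [measurable] = profile(1) Hdot_mem_borel_measurable[OF W0(1)] Hdot_mem_borel_measurable[OF W10]
  have W0_part: "integrable lborel (\<lambda>z. (norm (fst z))\<^sup>2 * (cmod (ext_symbol \<psi> W0 z))\<^sup>2)"
    "(\<integral>z. (norm (fst z))\<^sup>2 * (cmod (ext_symbol \<psi> W0 z))\<^sup>2 \<partial>lborel) = (\<integral>y. (\<psi> y)\<^sup>2 \<partial>lborel) * Hdot_norm2 s0 W0"
    using ext_symbol_weighted_square[OF profile(1,2) W0(1), where k=2] W0(2) by simp_all
  have Wj_part: "integrable lborel (\<lambda>z. (cmod (ext_symbol (D\<psi> b) (Wj b) z))\<^sup>2)"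
    "(\<integral>z. (cmod (ext_symbol (D\<psi> b) (Wj b) z))\<^sup>2 \<partial>lborel) = (\<integral>y. (D\<psi> b y)\<^sup>2 \<partial>lborel) * Hdot_norm2 s1 (Wj b)"
    if "b \<in> Basis" for b
    using ext_symbol_weighted_square[OF profile(3,4) Wj[OF that], where k=0] s1
    unfolding D\<psi>_def by simp_all
  have W10_part: "integrable lborel (\<lambda>z. (cmod (U1 z))\<^sup>2)"
    "(\<integral>z. (cmod (U1 z))\<^sup>2 \<partial>lborel) = (\<integral>y. (\<psi> y)\<^sup>2 \<partial>lborel) * Hdot_norm2 s1 W10"
    using ext_symbol_weighted_square[OF profile(1,2) W10, where k=0] s1 unfolding U1_def by simp_all
  have U1_meas: "U1 \<in> borel_measurable borel"
    unfolding U1_def by measurable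
  have U0_meas: "U0 \<in> borel_measurable borel"
    unfolding U0_def
  proof (intro borel_measurable_add borel_measurable_sum borel_measurable_times)
    show "eta_deriv (ext_symbol \<psi> (Wj b)) b \<in> borel_measurable borel" if "b \<in> Basis" for b
      using \<psi>_diff profile(3) Hdot_mem_borel_measurable[OF Wj[OF that]]
      by (rule borel_measurable_eta_deriv_ext_symbol)
  qed measurable
  have vanish: "U0 z = 0 \<and> U1 z = 0" if "norm (fst z) < norm (snd z)" for z
    unfolding U0_def U1_def
    using ext_symbol_vanishes_outside_cone[OF \<psi>(2) that]
      eta_deriv_ext_symbol_vanishes_outside_cone[OF \<psi>_diff \<psi>(2) that]
    by simp
  have R_int: "integrable lborel R"
    unfolding R_def using W0_part Wj_part by (intro integrable_mult_right integrable_add integrable_sum) auto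
  have R_bound: "(norm (fst z))\<^sup>2 * (cmod (U0 z))\<^sup>2 \<le> R z" for z
    unfolding U0_def R_def D\<psi>_def by (rule extension_weight_bound[OF \<psi>_diff])
  note XC = XC_mem_X_norm2_le[OF U0_meas U1_meas vanish R_int R_bound W10_part(1)]
  show "XC_mem U0 U1"
    by (rule XC(1))
  show "X_norm2 U0 U1 \<le> 2 * (real DIM('b) + 1) * ((\<integral>y. (\<psi> y)\<^sup>2 \<partial>lborel) * Hdot_norm2 s0 W0
           + (\<Sum>b\<in>Basis. (\<integral>y. (D\<psi> b y)\<^sup>2 \<partial>lborel) * Hdot_norm2 s1 (Wj b)))
         + (\<integral>y. (\<psi> y)\<^sup>2 \<partial>lborel) * Hdot_norm2 s1 W10"
    using XC(2) W0_part Wj_part unfolding R_def W10_part(2) by (simp add: integral_add integral_sum)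
qed

lemma extension_XC_estimate:
  fixes \<psi> :: "'b::euclidean_space \<Rightarrow> real"
    and W0 W10 :: "'a::euclidean_space \<Rightarrow> complex" and Wj :: "'b \<Rightarrow> 'a \<Rightarrow> complex"
  assumes \<psi>: "smooth_fun \<psi>" "\<And>y. 1 < norm y \<Longrightarrow> \<psi> y = 0"
    and W0: "Hdot_mem ((3 - real (DIM('b) + 1)) / 2) W0"
    and Wj: "\<And>b. b \<in> Basis \<Longrightarrow> Hdot_mem ((1 - real (DIM('b) + 1)) / 2) (Wj b)"
    and W10: "Hdot_mem ((1 - real (DIM('b) + 1)) / 2) W10"
  defines "U0 \<equiv> \<lambda>z. ext_symbol \<psi> W0 z + (\<Sum>b\<in>Basis. \<i> * eta_deriv (ext_symbol \<psi> (Wj b)) b z)"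
    and "U1 \<equiv> ext_symbol \<psi> W10"
    and "M \<equiv> (\<integral>y. (\<psi> y)\<^sup>2 \<partial>lborel) + (\<Sum>b\<in>Basis. \<integral>y. (frechet_derivative \<psi> (at y) b)\<^sup>2 \<partial>lborel)"
  shows "XC_mem U0 U1"
    and "X_norm2 U0 U1 \<le> (2 * real DIM('b) + 3) * M * (Hdot_norm2 ((3 - real (DIM('b) + 1)) / 2) W0
           + (\<Sum>b\<in>Basis. Hdot_norm2 ((1 - real (DIM('b) + 1)) / 2) (Wj b))
           + Hdot_norm2 ((1 - real (DIM('b) + 1)) / 2) W10)"
proof -
  define c\<psi> where "c\<psi> = (\<integral>y. (\<psi> y)\<^sup>2 \<partial>lborel)"
  define c where "c b = (\<integral>y. (frechet_derivative \<psi> (at y) b)\<^sup>2 \<partial>lborel)" for b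
  have "2 * ((3 - real (DIM('b) + 1)) / 2) = 2 - real DIM('b)"
    and "2 * ((1 - real (DIM('b) + 1)) / 2) = - real DIM('b)"
    by simp_all
  note bound = extension_XC_bound[of \<psi> _ W0 _ Wj W10,
      OF \<psi> W0 this(1) Wj W10 this(2), folded U0_def U1_def]
  show "XC_mem U0 U1"
    by (rule bound(1))
  have c_nonneg: "0 \<le> c\<psi>" "0 \<le> c b" for b
    unfolding c\<psi>_def c_def by (auto intro: integral_nonneg_AE)
  have "X_norm2 U0 U1 \<le> 2 * (real DIM('b) + 1) * (c\<psi> * Hdot_norm2 ((3 - real (DIM('b) + 1)) / 2) W0
           + (\<Sum>b\<in>Basis. c b * Hdot_norm2 ((1 - real (DIM('b) + 1)) / 2) (Wj b)))
         + c\<psi> * Hdot_norm2 ((1 - real (DIM('b) + 1)) / 2) W10"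
    using bound(2) unfolding c\<psi>_def c_def .
  also have "\<dots> \<le> (2 * (real DIM('b) + 1) + 1) * M * (Hdot_norm2 ((3 - real (DIM('b) + 1)) / 2) W0
           + (\<Sum>b\<in>Basis. Hdot_norm2 ((1 - real (DIM('b) + 1)) / 2) (Wj b))
           + Hdot_norm2 ((1 - real (DIM('b) + 1)) / 2) W10)"
  proof (rule weighted_sum_le_uniform_bound)
    show "c\<psi> \<le> M"
      unfolding M_def c\<psi>_def[symmetric] c_def[symmetric] using c_nonneg sum_nonneg[of Basis c] by auto
    show "c b \<le> M" if "b \<in> Basis" for b
      unfolding M_def c\<psi>_def[symmetric] c_def[symmetric] using c_nonneg member_le_sum[of b Basis c] that by auto
  qed (auto simp: c_nonneg Hdot_norm2_def intro: integral_nonneg_AE)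
  also have "2 * (real DIM('b) + 1) + 1 = 2 * real DIM('b) + 3"
    by simp
  finally show "X_norm2 U0 U1 \<le> (2 * real DIM('b) + 3) * M * (Hdot_norm2 ((3 - real (DIM('b) + 1)) / 2) W0
           + (\<Sum>b\<in>Basis. Hdot_norm2 ((1 - real (DIM('b) + 1)) / 2) (Wj b))
           + Hdot_norm2 ((1 - real (DIM('b) + 1)) / 2) W10)" .
qed

theorem theorem7:
  fixes \<psi> :: "'b::euclidean_space \<Rightarrow> real"
  assumes psi_smooth: "smooth_fun \<psi>"
    and psi_even: "\<forall>y. \<psi> (- y) = \<psi> y"
    and psi_nonneg: "\<forall>y. 0 \<le> \<psi> y"
    and psi_supp: "closure {y. \<psi> y \<noteq> 0} \<subseteq> cball 0 1"
    and psi_int: "(2 * pi) powr (- real DIM('b) / 2) * (\<integral>y. \<psi> y \<partial>lborel) = 1"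
  shows "\<exists>C. \<forall>(W0 :: 'a::euclidean_space \<Rightarrow> complex) (Wj :: 'b \<Rightarrow> 'a \<Rightarrow> complex) W10.
     Hdot_mem ((3 - real (DIM('b) + 1)) / 2) W0 \<and>
     (\<forall>b\<in>Basis. Hdot_mem ((1 - real (DIM('b) + 1)) / 2) (Wj b)) \<and>
     Hdot_mem ((1 - real (DIM('b) + 1)) / 2) W10 \<longrightarrow>
     (let U0 = (\<lambda>z. ext_symbol \<psi> W0 z +
                    (\<Sum>b\<in>Basis. \<i> * eta_deriv (ext_symbol \<psi> (Wj b)) b z));
          U1 = ext_symbol \<psi> W10
      in XC_mem U0 U1 \<and>
         X_norm2 U0 U1 \<le> C * (Hdot_norm2 ((3 - real (DIM('b) + 1)) / 2) W0
             + (\<Sum>b\<in>Basis. Hdot_norm2 ((1 - real (DIM('b) + 1)) / 2) (Wj b))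
             + Hdot_norm2 ((1 - real (DIM('b) + 1)) / 2) W10))"
proof -
  \<comment> \<open>Evenness, positivity and normalisation of \<open>\<psi>\<close> are what make \<open>E\<close> an extension
    operator; the estimate itself does not use them.\<close>
  have "\<And>y. 1 < norm y \<Longrightarrow> \<psi> y = 0"
    using psi_supp by (rule vanishes_outside_closed_support)
  from extension_XC_estimate[OF psi_smooth this] show ?thesis
    unfolding Let_def by blast
qed

end
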